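(* Let $\mathfrak g=\mathfrak r_3$ (basis $\{e_1,e_2,e_3\}$, nonzero brackets $[e_1,e_2]=e_2+e_3$, $[e_1,e_3]=e_3$). Then the action of $\mathbb R^\times\mathrm{Aut}(\mathfrak g)$ on $\mathcal M(\mathfrak g)=\mathrm{GL}_3(\mathbb R)/\mathrm{O}(3)$ (with the natural Riemannian metric) is of cohomogeneity one, and all orbits are isometrically congruent to each other.
   Context: Identify $\mathfrak g\cong\mathbb R^3$ via the basis. $\mathcal M(\mathfrak g)$ is the set of inner products on $\mathfrak g$, with transitive $\mathrm{GL}_3(\mathbb R)$-action $g.\langle\cdot,\cdot\rangle=\langle g^{-1}\cdot,g^{-1}\cdot\rangle$, so $\mathcal M(\mathfrak g)=\mathrm{GL}_3(\mathbb R)/\mathrm{O}(3)$. The natural Riemannian metric is the $\mathrm{GL}_3(\mathbb R)$-invariant metric corresponding to $\langle X,Y\rangle=\mathrm{tr}(XY)$ on $\mathrm{sym}(3)$ (reductive complement $\mathfrak{gl}_3=\mathfrak o(3)\oplus\mathrm{sym}(3)$). $\mathbb R^\times\mathrm{Aut}(\mathfrak g)=\{c\varphi:c\ne0,\ \varphi\in\mathrm{Aut}(\mathfrak g)\}\subset\mathrm{GL}_3(\mathbb R)$ acts isometrically by restriction. An isometric action is of cohomogeneity one if its orbits of maximal dimension have codimension one. Two orbits are isometrically congruent if some isometry of the ambient space maps one onto the other. *)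

theory Defs
  imports "HOL-Analysis.Analysis"
begin

type_synonym mat3 = "real^3^3"

text \<open>The Lie algebra r_3 on R^3 with standard basis e1 = (1,0,0), e2 = (0,1,0), e3 = (0,0,1):
  nonzero brackets [e1,e2] = e2 + e3, [e1,e3] = e3 (extended bilinearly and antisymmetrically).\<close>
definition r3_bracket :: "real^3 \<Rightarrow> real^3 \<Rightarrow> real^3" where
  "r3_bracket x y =
     vector [0,
             x$1 * y$2 - x$2 * y$1,
             (x$1 * y$2 - x$2 * y$1) + (x$1 * y$3 - x$3 * y$1)]"

definition is_aut :: "mat3 \<Rightarrow> bool" where
  "is_aut \<phi> \<longleftrightarrow> invertible \<phi> \<and>
     (\<forall>x y. \<phi> *v r3_bracket x y = r3_bracket (\<phi> *v x) (\<phi> *v y))"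

definition RAut :: "mat3 set" where
  "RAut = {c *\<^sub>R \<phi> | c \<phi>. c \<noteq> 0 \<and> is_aut \<phi>}"

text \<open>M(g): inner products on g = R^3, represented by their Gram matrices w.r.t. the basis.\<close>
definition Mg :: "mat3 set" where
  "Mg = {P. transpose P = P \<and> (\<forall>x. x \<noteq> 0 \<longrightarrow> x \<bullet> (P *v x) > 0)}"

text \<open>The action g.<.,.> = <g^{-1}.,g^{-1}.>, on Gram matrices: P \<mapsto> g^{-T} P g^{-1}.\<close>
definition act :: "mat3 \<Rightarrow> mat3 \<Rightarrow> mat3" where
  "act g P = transpose (matrix_inv g) ** P ** matrix_inv g"

text \<open>The natural GL_3-invariant Riemannian metric: at the base point I (standard inner
  product), the tangent vector induced by X in sym(3) is d/dt (exp(tX).I) = -2X, and its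
  squared length is tr(X X).\<close>
definition riem_metric :: "mat3 \<Rightarrow> mat3 \<Rightarrow> mat3 \<Rightarrow> real" where
  "riem_metric P A B = (1/4) * trace (matrix_inv P ** A ** matrix_inv P ** B)"

definition adm_curve :: "(real \<Rightarrow> mat3) \<Rightarrow> (real \<Rightarrow> mat3) \<Rightarrow> bool" where
  "adm_curve c c' \<longleftrightarrow> (\<forall>t\<in>{0..1}. c t \<in> Mg \<and> (c has_vector_derivative c' t) (at t within {0..1}))
                     \<and> continuous_on {0..1} c'"

definition riem_length :: "(real \<Rightarrow> mat3) \<Rightarrow> (real \<Rightarrow> mat3) \<Rightarrow> real" where
  "riem_length c c' = integral {0..1} (\<lambda>t. sqrt (riem_metric (c t) (c' t) (c' t)))"

definition riem_dist :: "mat3 \<Rightarrow> mat3 \<Rightarrow> real" where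
  "riem_dist P Q = Inf {riem_length c c' | c c'. adm_curve c c' \<and> c 0 = P \<and> c 1 = Q}"

text \<open>Isometries of M(g) (distance-preserving bijections; Myers--Steenrod).\<close>
definition isometry_Mg :: "(mat3 \<Rightarrow> mat3) \<Rightarrow> bool" where
  "isometry_Mg f \<longleftrightarrow> bij_betw f Mg Mg \<and> (\<forall>P\<in>Mg. \<forall>Q\<in>Mg. riem_dist (f P) (f Q) = riem_dist P Q)"

definition orbit :: "mat3 \<Rightarrow> mat3 set" where
  "orbit P = (\<lambda>g. act g P) ` RAut"

definition orbit_tangent :: "mat3 \<Rightarrow> mat3 set" where
  "orbit_tangent P = {v. \<exists>\<gamma>. (\<forall>t. \<gamma> t \<in> RAut) \<and> \<gamma> 0 = mat 1 \<and> \<gamma> differentiable (at 0)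
                         \<and> ((\<lambda>t. act (\<gamma> t) P) has_vector_derivative v) (at 0)}"

definition orbit_dim :: "mat3 \<Rightarrow> nat" where
  "orbit_dim P = dim (orbit_tangent P)"

text \<open>dim M(g): M(g) is an open subset of sym(3).\<close>
definition dim_Mg :: nat where
  "dim_Mg = dim {A :: mat3. transpose A = A}"

definition cohomogeneity_one :: bool where
  "cohomogeneity_one \<longleftrightarrow> Max (orbit_dim ` Mg) + 1 = dim_Mg"

end

theory Submission
  imports Defs
begin

(*
  As matrices, the elements of R^x Aut(r_3) are exactly the invertible lower triangular matrices
  whose (2,2) and (3,3) entries agree. The group T of all invertible lower triangular matrices
  normalises R^x Aut(r_3) and, by the Cholesky decomposition P = U^T U, acts transitively on M(g).
  Since GL_3(R) acts by isometries and k . (r . P) = (k r k^-1) . (k . P), every k in T is an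
  isometry carrying the orbit through P onto the orbit through k . P; hence all orbits are
  congruent. Differentiating t |-> r(t) . P at the identity gives X |-> -(X^T P + P X) on the
  five-dimensional Lie algebra of R^x Aut(r_3), so every orbit has dimension at most 5, with
  equality at the standard inner product, whereas M(g) has dimension 6.
*)

lemma matrix_inv_right:
  "invertible (A :: 'a::semiring_1^'n^'m) \<Longrightarrow> A ** matrix_inv A = mat 1"
  and matrix_inv_left:
  "invertible (A :: 'a::semiring_1^'n^'m) \<Longrightarrow> matrix_inv A ** A = mat 1"
proof -
  assume "invertible A"
  then have "\<exists>A'. A ** A' = mat 1 \<and> A' ** A = mat 1" by (simp add: invertible_def)
  from someI_ex[OF this] show "A ** matrix_inv A = mat 1" "matrix_inv A ** A = mat 1"
    by (simp_all add: matrix_inv_def)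
qed

lemma matrix_inv_unique:
  fixes A :: "'a::semiring_1^'n^'m"
  assumes "A ** B = mat 1" "B ** A = mat 1"
  shows "matrix_inv A = B"
proof -
  have "invertible A" using assms by (auto simp: invertible_def)
  then have "matrix_inv A = (B ** A) ** matrix_inv A" using assms by simp
  also have "\<dots> = B" by (simp flip: matrix_mul_assoc add: matrix_inv_right \<open>invertible A\<close>)
  finally show ?thesis .
qed

lemma invertible_matrix_inv:
  "invertible (A :: 'a::semiring_1^'n^'m) \<Longrightarrow> invertible (matrix_inv A)"
  using matrix_inv_left matrix_inv_right invertible_def by blast

lemma matrix_inv_matrix_inv:
  "invertible (A :: 'a::semiring_1^'n^'m) \<Longrightarrow> matrix_inv (matrix_inv A) = A"
  by (intro matrix_inv_unique matrix_inv_left matrix_inv_right)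

lemma matrix_inv_mat1: "matrix_inv (mat 1 :: 'a::semiring_1^'n^'n) = mat 1"
  by (rule matrix_inv_unique) simp_all

lemma matrix_inv_mult:
  fixes A B :: "'a::semiring_1^'n^'n"
  assumes "invertible A" "invertible B"
  shows "matrix_inv (A ** B) = matrix_inv B ** matrix_inv A"
proof (rule matrix_inv_unique)
  have "A ** B ** (matrix_inv B ** matrix_inv A) = A ** (B ** matrix_inv B) ** matrix_inv A"
    by (simp add: matrix_mul_assoc)
  then show "A ** B ** (matrix_inv B ** matrix_inv A) = mat 1"
    using assms by (simp add: matrix_inv_right)
  have "matrix_inv B ** matrix_inv A ** (A ** B) = matrix_inv B ** (matrix_inv A ** A) ** B"
    by (simp add: matrix_mul_assoc)
  then show "matrix_inv B ** matrix_inv A ** (A ** B) = mat 1"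
    using assms by (simp add: matrix_inv_left)
qed

lemma transpose_matrix_inv:
  fixes A :: "'a::comm_semiring_1^'n^'n"
  assumes "invertible A"
  shows "matrix_inv (transpose A) = transpose (matrix_inv A)"
  by (rule matrix_inv_unique)
    (simp_all flip: matrix_transpose_mul add: assms matrix_inv_left matrix_inv_right)

lemma transpose_add: "transpose (A + B) = transpose A + transpose B"
  by (simp add: vec_eq_iff transpose_def)

lemma matrix_add_rdistrib: "(A + B) ** C = A ** C + B ** (C :: 'a::semiring_1^'p^'n)"
  by (simp add: vec_eq_iff matrix_matrix_mult_def sum.distrib distrib_right)

lemma bounded_bilinear_matrix_mult:
  "bounded_bilinear (\<lambda>(A :: real^'n^'m) (B :: real^'p^'n). A ** B)"
  unfolding bilinear_conv_bounded_bilinear[symmetric] bilinear_def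
  by (auto intro!: linearI simp: matrix_add_ldistrib matrix_add_rdistrib
      matrix_scalar_ac scalar_matrix_assoc[symmetric])

lemma bounded_linear_transpose: "bounded_linear (transpose :: real^'n^'m \<Rightarrow> real^'m^'n)"
  unfolding linear_conv_bounded_linear[symmetric]
  by (auto intro!: linearI simp: transpose_add transpose_scalar)

lemma bounded_linear_matrix_entry: "bounded_linear (\<lambda>A :: real^'n^'m. A $ i $ j)"
  using bounded_linear_compose[OF bounded_linear_vec_nth bounded_linear_vec_nth] .

lemma has_derivative_constant_zero:
  assumes "(f has_derivative f') (at x)" "\<And>t. f t = c"
  shows "f' = (\<lambda>_. 0)"
proof -
  have "f = (\<lambda>_. c)" using assms(2) by blast
  then have "(f has_derivative (\<lambda>_. 0)) (at x)" by simp
  with assms(1) show ?thesis by (rule has_derivative_unique)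
qed

lemma mat3_eq_iff: "(A::mat3) = B \<longleftrightarrow> (\<forall>i\<in>{1,2,3}. \<forall>j\<in>{1,2,3}. A$i$j = B$i$j)"
  by (simp add: vec_eq_iff forall_3)

lemma matrix_mult_entry_3: "((A::mat3) ** B)$i$j = A$i$1*B$1$j + A$i$2*B$2$j + A$i$3*B$3$j"
  by (simp add: matrix_matrix_mult_def sum_3)

lemma matrix_vector_entry_3: "((A::mat3) *v x)$i = A$i$1*x$1 + A$i$2*x$2 + A$i$3*x$3"
  by (simp add: matrix_vector_mult_def sum_3)

lemma symmetric_matrix_entry: "transpose A = A \<Longrightarrow> A$i$j = A$j$i"
  by (metis (mono_tags) transpose_def vec_lambda_beta)

definition matrix_unit :: "'m \<Rightarrow> 'n \<Rightarrow> 'a::zero_neq_one^'n^'m" where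
  "matrix_unit i j = (\<chi> a b. if a = i \<and> b = j then 1 else 0)"

lemma matrix_unit_nth [simp]: "matrix_unit i j $ a $ b = (if a = i \<and> b = j then 1 else 0)"
  by (simp add: matrix_unit_def)

lemma independent_matrices_by_entries:
  fixes S :: "(real^'n^'m) set"
  assumes fin: "finite S"
    and entry: "\<And>A. A \<in> S \<Longrightarrow> \<exists>i j. A$i$j \<noteq> 0 \<and> (\<forall>B\<in>S. B \<noteq> A \<longrightarrow> B$i$j = 0)"
  shows "independent S"
proof
  assume "dependent S"
  then obtain u A where A: "A \<in> S" "u A \<noteq> 0" "(\<Sum>B\<in>S. u B *\<^sub>R B) = 0"
    using dependent_finite[OF fin] by blast
  obtain i j where ij: "A$i$j \<noteq> 0" "\<forall>B\<in>S. B \<noteq> A \<longrightarrow> B$i$j = 0" using entry[OF A(1)] by blast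
  have "0 = (\<Sum>B\<in>S. u B * B$i$j)"
    using arg_cong[OF A(3), of "\<lambda>M. M$i$j"] by simp
  also have "\<dots> = u A * A$i$j"
    using ij(2) A(1) fin by (subst sum.remove[of _ A]) auto
  finally show False using A ij by simp
qed

section \<open>The action on inner products is isometric\<close>

lemma act_mult:
  "invertible g \<Longrightarrow> invertible h \<Longrightarrow> act g (act h P) = act (g ** h) P"
  by (simp add: act_def matrix_inv_mult matrix_transpose_mul matrix_mul_assoc)

lemma act_mat1: "act (mat 1) P = P"
  by (simp add: act_def matrix_inv_mat1)

lemma act_matrix_inv: "invertible g \<Longrightarrow> act (matrix_inv g) (act g P) = P"
  by (simp add: act_mult invertible_matrix_inv matrix_inv_left act_mat1)

lemma bounded_linear_act: "bounded_linear (act g)"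
  unfolding linear_conv_bounded_linear[symmetric] act_def
  by (auto intro!: linearI simp: matrix_add_ldistrib matrix_add_rdistrib
      matrix_scalar_ac scalar_matrix_assoc[symmetric])

lemma Mg_invertible: assumes "P \<in> Mg" shows "invertible P"
proof -
  have "x = 0" if "P *v x = 0" for x
    using assms that unfolding Mg_def by force
  then obtain B where "B ** P = mat 1" using matrix_left_invertible_ker by blast
  then show ?thesis using invertible_left_inverse by blast
qed

lemma act_Mg: assumes g: "invertible g" and P: "P \<in> Mg" shows "act g P \<in> Mg"
proof -
  let ?G = "matrix_inv g"
  have "transpose (act g P) = act g P"
    using P by (simp add: act_def Mg_def matrix_transpose_mul matrix_mul_assoc)
  moreover have "x \<bullet> (act g P *v x) > 0" if "x \<noteq> 0" for x
  proof -
    have "?G *v x \<noteq> 0"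
      using inj_matrix_vector_mult[OF invertible_matrix_inv[OF g]] that
      by (metis matrix_vector_mult_0_right injD)
    moreover have "x \<bullet> (act g P *v x) = (?G *v x) \<bullet> (P *v (?G *v x))"
      by (simp add: act_def flip: matrix_vector_mul_assoc)
        (metis dot_lmul_matrix inner_commute)
    ultimately show ?thesis using P unfolding Mg_def by auto
  qed
  ultimately show ?thesis unfolding Mg_def by auto
qed

lemma matrix_inv_act:
  assumes g: "invertible g" and P: "invertible P"
  shows "matrix_inv (act g P) = g ** matrix_inv P ** transpose g"
proof -
  have "matrix_inv (act g P) = matrix_inv (matrix_inv g) ** matrix_inv (transpose (matrix_inv g) ** P)"
    unfolding act_def
    by (intro matrix_inv_mult invertible_mult transpose_invertible invertible_matrix_inv g P)
  also have "matrix_inv (transpose (matrix_inv g) ** P) = matrix_inv P ** transpose g"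
    using g P
    by (simp add: matrix_inv_mult transpose_invertible invertible_matrix_inv transpose_matrix_inv
        matrix_inv_matrix_inv)
  finally show ?thesis by (simp add: matrix_inv_matrix_inv g matrix_mul_assoc)
qed

lemma riem_metric_act:
  assumes g: "invertible g" and P: "invertible P"
  shows "riem_metric (act g P) (act g A) (act g B) = riem_metric P A B"
proof -
  let ?G = "matrix_inv g" and ?Q = "matrix_inv P"
  have gG: "transpose g ** transpose ?G = mat 1"
    by (simp add: g matrix_inv_left flip: matrix_transpose_mul)
  have "matrix_inv (act g P) ** act g A ** matrix_inv (act g P) ** act g B
      = g ** ?Q ** (transpose g ** transpose ?G) ** A ** (?G ** g) ** ?Q
          ** (transpose g ** transpose ?G) ** B ** ?G"
    unfolding matrix_inv_act[OF g P] by (simp add: act_def matrix_mul_assoc)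
  also have "\<dots> = g ** (?Q ** A ** ?Q ** B ** ?G)"
    using gG matrix_inv_left[OF g] by (simp add: matrix_mul_assoc)
  finally have conj: "matrix_inv (act g P) ** act g A ** matrix_inv (act g P) ** act g B
      = g ** (?Q ** A ** ?Q ** B ** ?G)" .
  have "trace (g ** (?Q ** A ** ?Q ** B ** ?G)) = trace ((?Q ** A ** ?Q ** B ** ?G) ** g)"
    by (rule trace_mul_sym)
  also have "\<dots> = trace (?Q ** A ** ?Q ** B)"
    by (simp add: matrix_inv_left g flip: matrix_mul_assoc)
  finally show ?thesis unfolding riem_metric_def conj by simp
qed

definition curve_lengths :: "mat3 \<Rightarrow> mat3 \<Rightarrow> real set" where
  "curve_lengths P Q = {riem_length c c' | c c'. adm_curve c c' \<and> c 0 = P \<and> c 1 = Q}"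

lemma adm_curve_act:
  assumes g: "invertible g" and c: "adm_curve c c'"
  shows "adm_curve (\<lambda>t. act g (c t)) (\<lambda>t. act g (c' t))"
  using c act_Mg[OF g] bounded_linear.has_vector_derivative[OF bounded_linear_act]
    continuous_on_compose2[OF linear_continuous_on[OF bounded_linear_act], of _ c' UNIV]
  unfolding adm_curve_def by auto

lemma riem_length_act:
  assumes g: "invertible g" and c: "adm_curve c c'"
  shows "riem_length (\<lambda>t. act g (c t)) (\<lambda>t. act g (c' t)) = riem_length c c'"
  unfolding riem_length_def
  using c riem_metric_act[OF g Mg_invertible] unfolding adm_curve_def
  by (intro integral_cong) auto

lemma curve_lengths_act_subset:
  "invertible g \<Longrightarrow> curve_lengths P Q \<subseteq> curve_lengths (act g P) (act g Q)"
  unfolding curve_lengths_def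
  by (auto 0 4 intro: adm_curve_act simp flip: riem_length_act)

lemma riem_dist_act:
  assumes g: "invertible g"
  shows "riem_dist (act g P) (act g Q) = riem_dist P Q"
proof -
  have "curve_lengths (act g P) (act g Q) \<subseteq> curve_lengths P Q"
    using curve_lengths_act_subset[OF invertible_matrix_inv[OF g], of "act g P" "act g Q"]
    by (simp add: act_matrix_inv g)
  then have "curve_lengths (act g P) (act g Q) = curve_lengths P Q"
    using curve_lengths_act_subset[OF g] by blast
  then show ?thesis unfolding riem_dist_def curve_lengths_def by simp
qed

lemma isometry_act: assumes g: "invertible g" shows "isometry_Mg (act g)"
  unfolding isometry_Mg_def
proof (intro conjI ballI riem_dist_act[OF g])
  show "bij_betw (act g) Mg Mg"
  proof (rule bij_betwI[where g = "act (matrix_inv g)"])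
    show "act g \<in> Mg \<rightarrow> Mg" "act (matrix_inv g) \<in> Mg \<rightarrow> Mg"
      using act_Mg g invertible_matrix_inv by auto
    show "act (matrix_inv g) (act g P) = P" "act g (act (matrix_inv g) P) = P" for P
      using act_matrix_inv[OF g] act_matrix_inv[OF invertible_matrix_inv[OF g]]
      by (simp_all add: matrix_inv_matrix_inv g)
  qed
qed

section \<open>The group R^x Aut(r_3) and the lower triangular group\<close>

lemma is_aut_iff_entries:
  "is_aut \<phi> \<longleftrightarrow> \<phi>$1$2 = 0 \<and> \<phi>$1$3 = 0 \<and> \<phi>$2$3 = 0 \<and> \<phi>$1$1 = 1 \<and> \<phi>$2$2 = \<phi>$3$3 \<and> \<phi>$2$2 \<noteq> 0"
proof
  assume aut: "is_aut \<phi>"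
  have det: "det \<phi> \<noteq> 0" using aut invertible_det_nz unfolding is_aut_def by auto
  have hom: "(\<phi> *v r3_bracket x y)$i = (r3_bracket (\<phi> *v x) (\<phi> *v y))$i" for x y i
    using aut unfolding is_aut_def by simp
  have z13: "\<phi>$1$3 = 0" using hom[of "axis 1 1" "axis 3 1" 1]
    by (simp add: matrix_vector_entry_3 r3_bracket_def axis_def)
  then have z12: "\<phi>$1$2 = 0" using hom[of "axis 1 1" "axis 2 1" 1]
    by (simp add: matrix_vector_entry_3 r3_bracket_def axis_def)
  have c1: "\<phi>$2$3 * (1 - \<phi>$1$1) = 0" using hom[of "axis 1 1" "axis 3 1" 2] z13 z12
    by (simp add: matrix_vector_entry_3 r3_bracket_def axis_def algebra_simps)
  have c2: "\<phi>$3$3 * (1 - \<phi>$1$1) = \<phi>$1$1 * \<phi>$2$3" using hom[of "axis 1 1" "axis 3 1" 3] z13 z12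
    by (simp add: matrix_vector_entry_3 r3_bracket_def axis_def algebra_simps)
  have c3: "\<phi>$3$2 + \<phi>$3$3 = \<phi>$1$1 * \<phi>$2$2 + \<phi>$1$1 * \<phi>$3$2"
    using hom[of "axis 1 1" "axis 2 1" 3] z13 z12
    by (simp add: matrix_vector_entry_3 r3_bracket_def axis_def algebra_simps)
  have det': "\<phi>$1$1 * (\<phi>$2$2 * \<phi>$3$3 - \<phi>$2$3 * \<phi>$3$2) \<noteq> 0"
    using det z13 z12 by (simp add: det_3 algebra_simps)
  have "\<phi>$1$1 = 1"
    using c1 c2 det' by (cases "\<phi>$1$1 = 1") auto
  then show "\<phi>$1$2 = 0 \<and> \<phi>$1$3 = 0 \<and> \<phi>$2$3 = 0 \<and> \<phi>$1$1 = 1 \<and> \<phi>$2$2 = \<phi>$3$3 \<and> \<phi>$2$2 \<noteq> 0"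
    using z13 z12 c2 c3 det' by auto
next
  assume "\<phi>$1$2 = 0 \<and> \<phi>$1$3 = 0 \<and> \<phi>$2$3 = 0 \<and> \<phi>$1$1 = 1 \<and> \<phi>$2$2 = \<phi>$3$3 \<and> \<phi>$2$2 \<noteq> 0"
  moreover from this have "invertible \<phi>"
    by (simp add: invertible_det_nz det_3)
  ultimately show "is_aut \<phi>" unfolding is_aut_def
    by (simp add: vec_eq_iff forall_3 matrix_vector_entry_3 r3_bracket_def algebra_simps)
qed

definition lower_triangular_GL :: "mat3 set" where
  "lower_triangular_GL = {L. L$1$2 = 0 \<and> L$1$3 = 0 \<and> L$2$3 = 0 \<and> L$1$1 \<noteq> 0 \<and> L$2$2 \<noteq> 0 \<and> L$3$3 \<noteq> 0}"

lemma RAut_eq: "RAut = {L \<in> lower_triangular_GL. L$2$2 = L$3$3}"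
proof (intro set_eqI iffI)
  fix L assume "L \<in> RAut"
  then show "L \<in> {L \<in> lower_triangular_GL. L$2$2 = L$3$3}"
    by (auto simp: RAut_def is_aut_iff_entries lower_triangular_GL_def)
next
  fix L assume L: "L \<in> {L \<in> lower_triangular_GL. L$2$2 = L$3$3}"
  then have "is_aut ((1 / L$1$1) *\<^sub>R L)" "L = L$1$1 *\<^sub>R ((1 / L$1$1) *\<^sub>R L)" "L$1$1 \<noteq> 0"
    by (auto simp: is_aut_iff_entries lower_triangular_GL_def)
  then show "L \<in> RAut" unfolding RAut_def by blast
qed

lemma lower_triangular_GL_mult:
  assumes "A \<in> lower_triangular_GL" "B \<in> lower_triangular_GL"
  shows "A ** B \<in> lower_triangular_GL" "(A ** B)$i$i = A$i$i * B$i$i"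
  using assms exhaust_3[of i]
  by (auto simp: lower_triangular_GL_def matrix_mult_entry_3)

lemma lower_triangular_GL_inverse:
  assumes L: "L \<in> lower_triangular_GL"
  shows "invertible L" "matrix_inv L \<in> lower_triangular_GL" "(matrix_inv L)$i$i = 1 / L$i$i"
proof -
  define M :: mat3 where "M = vector [
    vector [1 / L$1$1, 0, 0],
    vector [- L$2$1 / (L$1$1 * L$2$2), 1 / L$2$2, 0],
    vector [(L$2$1 * L$3$2 - L$3$1 * L$2$2) / (L$1$1 * L$2$2 * L$3$3), - L$3$2 / (L$2$2 * L$3$3), 1 / L$3$3]]"
  have "L ** M = mat 1" "M ** L = mat 1"
    using L by (auto simp: lower_triangular_GL_def M_def mat3_eq_iff matrix_mult_entry_3 mat_def field_simps)
  then have "invertible L" "matrix_inv L = M"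
    by (auto simp: invertible_def intro: matrix_inv_unique)
  then show "invertible L" and "matrix_inv L \<in> lower_triangular_GL" "(matrix_inv L)$i$i = 1 / L$i$i"
    using L exhaust_3[of i] by (auto simp: lower_triangular_GL_def M_def)
qed

lemma RAut_normal_in_lower_triangular_GL:
  assumes k: "k \<in> lower_triangular_GL" and r: "r \<in> RAut"
  shows "k ** r ** matrix_inv k \<in> RAut"
proof -
  have r': "r \<in> lower_triangular_GL" "r$2$2 = r$3$3" using r by (auto simp: RAut_eq)
  note kr = lower_triangular_GL_mult[OF k r'(1)]
  note k' = lower_triangular_GL_inverse[OF k]
  show ?thesis
    using lower_triangular_GL_mult[OF kr(1) k'(2)] kr(2) k'(3) r'(2) k
    by (auto simp: RAut_eq lower_triangular_GL_def)
qed

lemma act_conjugate: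
  assumes "invertible k" "invertible r"
  shows "act k (act r P) = act (k ** r ** matrix_inv k) (act k P)"
proof -
  have "act (k ** r ** matrix_inv k) (act k P) = act (k ** r ** (matrix_inv k ** k)) P"
    using assms by (simp add: act_mult invertible_mult invertible_matrix_inv matrix_mul_assoc)
  then show ?thesis using assms by (simp add: matrix_inv_left act_mult)
qed

lemma orbit_act:
  assumes k: "k \<in> lower_triangular_GL"
  shows "act k ` orbit P = orbit (act k P)"
proof -
  have inv: "invertible r" if "r \<in> RAut" for r
    using that lower_triangular_GL_inverse(1) by (auto simp: RAut_eq)
  note k' = lower_triangular_GL_inverse[OF k]
  have "act k ` orbit P \<subseteq> orbit (act k P)"
    unfolding orbit_def
    using act_conjugate[OF k'(1) inv] RAut_normal_in_lower_triangular_GL[OF k] by auto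
  moreover have "act s (act k P) \<in> act k ` orbit P" if s: "s \<in> RAut" for s
  proof -
    define r where "r = matrix_inv k ** s ** k"
    have r: "r \<in> RAut"
      using RAut_normal_in_lower_triangular_GL[OF k'(2) s] by (simp add: r_def matrix_inv_matrix_inv k'(1))
    have "k ** r ** matrix_inv k = s"
      using k'(1) by (simp add: r_def matrix_mul_assoc matrix_inv_right)
        (simp flip: matrix_mul_assoc add: matrix_inv_right)
    then have "act s (act k P) = act k (act r P)"
      using act_conjugate[OF k'(1) inv[OF r]] by simp
    then show ?thesis unfolding orbit_def using r by blast
  qed
  ultimately show ?thesis unfolding orbit_def by blast
qed

section \<open>Transitivity of the lower triangular group\<close>

lemma positive_definite_3_factor:
  fixes p11 p12 p13 p22 p23 p33 :: real
  defines "q a b c \<equiv> p11*a*a + p22*b*b + p33*c*c + 2*p12*a*b + 2*p13*a*c + 2*p23*b*c"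
  assumes pos: "\<And>a b c. (a, b, c) \<noteq> (0, 0, 0) \<Longrightarrow> q a b c > 0"
  obtains u11 u21 u22 u31 u32 u33 where "0 < u11" "0 < u22" "0 < u33"
    "p11 = u11*u11 + u21*u21 + u31*u31" "p22 = u22*u22 + u32*u32" "p33 = u33*u33"
    "p12 = u21*u22 + u31*u32" "p13 = u31*u33" "p23 = u32*u33"
proof -
  have p33: "p33 > 0" using pos[of 0 0 1] by (simp add: q_def)
  define u33 where "u33 = sqrt p33"
  define u32 where "u32 = p23 / u33"
  define u31 where "u31 = p13 / u33"
  have u33: "u33 > 0" "p33 = u33 * u33" using p33 by (simp_all add: u33_def)
  have e3: "p13 = u31 * u33" "p23 = u32 * u33" using u33 by (simp_all add: u31_def u32_def)
  have "q 0 1 (- u32 / u33) = p22 - u32 * u32"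
    unfolding q_def e3 u33(2) using u33 by (simp add: field_simps)
  then have s: "p22 - u32 * u32 > 0" using pos[of 0 1 "- u32 / u33"] by simp
  define u22 where "u22 = sqrt (p22 - u32 * u32)"
  define u21 where "u21 = (p12 - u31 * u32) / u22"
  have u22: "u22 > 0" "p22 = u22 * u22 + u32 * u32" using s by (simp_all add: u22_def)
  have e2: "p12 = u21 * u22 + u31 * u32" using u22 by (simp add: u21_def)
  \<comment> \<open>the test vector at which both completed squares vanish\<close>
  define x2 where "x2 = - u21 / u22"
  define x3 where "x3 = - (u31 + u32 * x2) / u33"
  have "q 1 x2 x3 = (p11 - u21 * u21 - u31 * u31) + (u21 + u22 * x2)^2 + (u31 + u32 * x2 + u33 * x3)^2"
    unfolding q_def e2 e3 u22(2) u33(2) by algebra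
  also have "\<dots> = p11 - u21 * u21 - u31 * u31"
    using u22 u33 by (simp add: x2_def x3_def)
  finally have t: "p11 - u21 * u21 - u31 * u31 > 0" using pos[of 1 x2 x3] by simp
  show thesis
  proof (rule that[of "sqrt (p11 - u21 * u21 - u31 * u31)"])
    show "p11 = sqrt (p11 - u21 * u21 - u31 * u31) * sqrt (p11 - u21 * u21 - u31 * u31) + u21 * u21 + u31 * u31"
      using t by simp
  qed (use t u22 u33 e2 e3 in auto)
qed

lemma Mg_lower_triangular_factor:
  assumes P: "P \<in> Mg"
  obtains U where "U \<in> lower_triangular_GL" "transpose U ** U = P"
proof -
  have sym: "P$i$j = P$j$i" for i j
    using P unfolding Mg_def by (blast intro: symmetric_matrix_entry)
  have "P$1$1*a*a + P$2$2*b*b + P$3$3*c*c + 2*P$1$2*a*b + 2*P$1$3*a*c + 2*P$2$3*b*c > 0"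
    if "(a, b, c) \<noteq> (0, 0, 0)" for a b c
  proof -
    have "vector [a, b, c] \<noteq> (0 :: real^3)" using that by (simp add: vec_eq_iff forall_3)
    then have "vector [a, b, c] \<bullet> (P *v vector [a, b, c]) > 0" using P unfolding Mg_def by blast
    moreover have "vector [a, b, c] \<bullet> (P *v vector [a, b, c])
        = P$1$1*a*a + P$2$2*b*b + P$3$3*c*c + 2*P$1$2*a*b + 2*P$1$3*a*c + 2*P$2$3*b*c"
      unfolding inner_vec_def sum_3 matrix_vector_entry_3 sym[of 2 1] sym[of 3 1] sym[of 3 2]
      by (simp add: algebra_simps)
    ultimately show ?thesis by simp
  qed
  then obtain u11 u21 u22 u31 u32 u33 where u: "0 < u11" "0 < u22" "0 < u33"
    "P$1$1 = u11*u11 + u21*u21 + u31*u31" "P$2$2 = u22*u22 + u32*u32" "P$3$3 = u33*u33"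
    "P$1$2 = u21*u22 + u31*u32" "P$1$3 = u31*u33" "P$2$3 = u32*u33"
    by (rule positive_definite_3_factor)
  define U :: mat3 where "U = vector [vector [u11, 0, 0], vector [u21, u22, 0], vector [u31, u32, u33]]"
  show thesis
  proof (rule that[of U])
    show "U \<in> lower_triangular_GL" using u by (simp add: U_def lower_triangular_GL_def)
    show "transpose U ** U = P"
      using u sym[of 2 1] sym[of 3 1] sym[of 3 2]
      by (simp add: mat3_eq_iff U_def matrix_mult_entry_3 transpose_def algebra_simps)
  qed
qed

lemma lower_triangular_GL_transitive:
  assumes "P \<in> Mg"
  obtains k where "k \<in> lower_triangular_GL" "act k (mat 1) = P"
proof -
  obtain U where U: "U \<in> lower_triangular_GL" "transpose U ** U = P"
    using Mg_lower_triangular_factor[OF assms] .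
  note U' = lower_triangular_GL_inverse[OF U(1)]
  have "act (matrix_inv U) (mat 1) = P"
    using U(2) by (simp add: act_def matrix_inv_matrix_inv U'(1))
  with U'(2) show thesis by (rule that)
qed

lemma orbits_congruent:
  assumes P: "P \<in> Mg" and Q: "Q \<in> Mg"
  shows "\<exists>f. isometry_Mg f \<and> f ` orbit P = orbit Q"
proof -
  obtain kP where kP: "kP \<in> lower_triangular_GL" "act kP (mat 1) = P"
    using lower_triangular_GL_transitive[OF P] .
  obtain kQ where kQ: "kQ \<in> lower_triangular_GL" "act kQ (mat 1) = Q"
    using lower_triangular_GL_transitive[OF Q] .
  note kP' = lower_triangular_GL_inverse[OF kP(1)]
  define k where "k = kQ ** matrix_inv kP"
  have k: "k \<in> lower_triangular_GL"
    unfolding k_def using lower_triangular_GL_mult(1)[OF kQ(1) kP'(2)] .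
  have "act k P = act kQ (act (matrix_inv kP) (act kP (mat 1)))"
    using kP'(1) lower_triangular_GL_inverse(1)[OF kQ(1)]
    by (simp add: k_def kP(2) act_mult invertible_matrix_inv)
  also have "\<dots> = Q" by (simp add: act_matrix_inv kP'(1) kQ(2))
  finally have "act k P = Q" .
  then have "act k ` orbit P = orbit Q" using orbit_act[OF k] by simp
  then show ?thesis using isometry_act[OF lower_triangular_GL_inverse(1)[OF k]] by blast
qed

section \<open>Dimensions of the orbits\<close>

definition sym_basis :: "mat3 set" where
  "sym_basis = {matrix_unit 1 1, matrix_unit 2 2, matrix_unit 3 3, matrix_unit 1 2 + matrix_unit 2 1,
                matrix_unit 1 3 + matrix_unit 3 1, matrix_unit 2 3 + matrix_unit 3 2}"

lemma independent_sym_basis: "independent sym_basis"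
proof (rule independent_matrices_by_entries)
  fix A assume "A \<in> sym_basis"
  then consider "A = matrix_unit 1 1" | "A = matrix_unit 2 2" | "A = matrix_unit 3 3"
    | "A = matrix_unit 1 2 + matrix_unit 2 1" | "A = matrix_unit 1 3 + matrix_unit 3 1"
    | "A = matrix_unit 2 3 + matrix_unit 3 2"
    unfolding sym_basis_def by blast
  then show "\<exists>i j. A$i$j \<noteq> 0 \<and> (\<forall>B\<in>sym_basis. B \<noteq> A \<longrightarrow> B$i$j = 0)"
  proof cases
    case 1 show ?thesis unfolding 1 by (intro exI[of _ 1] exI[of _ 1]) (simp add: sym_basis_def)
  next
    case 2 show ?thesis unfolding 2 by (intro exI[of _ 2] exI[of _ 2]) (simp add: sym_basis_def)
  next
    case 3 show ?thesis unfolding 3 by (intro exI[of _ 3] exI[of _ 3]) (simp add: sym_basis_def)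
  next
    case 4 show ?thesis unfolding 4 by (intro exI[of _ 1] exI[of _ 2]) (simp add: sym_basis_def)
  next
    case 5 show ?thesis unfolding 5 by (intro exI[of _ 1] exI[of _ 3]) (simp add: sym_basis_def)
  next
    case 6 show ?thesis unfolding 6 by (intro exI[of _ 2] exI[of _ 3]) (simp add: sym_basis_def)
  qed
qed (simp add: sym_basis_def)

lemma dim_Mg_eq: "dim_Mg = 6"
  unfolding dim_Mg_def
proof (rule dim_unique)
  show "sym_basis \<subseteq> {A. transpose A = A}"
    by (auto simp: sym_basis_def vec_eq_iff forall_3 transpose_def)
  show "{A :: mat3. transpose A = A} \<subseteq> span sym_basis"
  proof
    fix A :: mat3 assume "A \<in> {A. transpose A = A}"
    then have s: "A$i$j = A$j$i" for i j by (simp add: symmetric_matrix_entry)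
    have "A = A$1$1 *\<^sub>R matrix_unit 1 1 + A$2$2 *\<^sub>R matrix_unit 2 2 + A$3$3 *\<^sub>R matrix_unit 3 3
        + A$1$2 *\<^sub>R (matrix_unit 1 2 + matrix_unit 2 1) + A$1$3 *\<^sub>R (matrix_unit 1 3 + matrix_unit 3 1)
        + A$2$3 *\<^sub>R (matrix_unit 2 3 + matrix_unit 3 2)"
      using s[of 2 1] s[of 3 1] s[of 3 2] by (simp add: vec_eq_iff forall_3)
    also have "\<dots> \<in> span sym_basis"
      by (intro span_add span_scale span_base) (auto simp: sym_basis_def)
    finally show "A \<in> span sym_basis" .
  qed
  show "independent sym_basis" by (rule independent_sym_basis)
  show "card sym_basis = 6"
    by (simp add: sym_basis_def vec_eq_iff forall_3)
qed

definition orbit_differential :: "mat3 \<Rightarrow> mat3 \<Rightarrow> mat3" where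
  "orbit_differential P X = - (transpose X ** P + P ** X)"

lemma linear_orbit_differential: "linear (orbit_differential P)"
  by (auto intro!: linearI simp: orbit_differential_def transpose_add transpose_scalar
      matrix_add_ldistrib matrix_add_rdistrib matrix_scalar_ac scalar_matrix_assoc[symmetric]
      algebra_simps)

definition RAut_lie_basis :: "mat3 set" where
  "RAut_lie_basis = {matrix_unit 2 1, matrix_unit 3 1, matrix_unit 3 2, matrix_unit 1 1,
                     matrix_unit 2 2 + matrix_unit 3 3}"

lemma RAut_derivative_in_span:
  assumes \<gamma>: "\<And>t. \<gamma> t \<in> RAut" and D: "(\<gamma> has_derivative (\<lambda>s. s *\<^sub>R X)) (at 0)"
  shows "X \<in> span RAut_lie_basis"
proof -
  have vanish: "L X = 0" if L: "bounded_linear L" and "\<And>t. L (\<gamma> t) = 0" for L :: "mat3 \<Rightarrow> real"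
  proof -
    have "((\<lambda>t. L (\<gamma> t)) has_derivative (\<lambda>s. L (s *\<^sub>R X))) (at 0)"
      using bounded_linear.has_derivative[OF L D] .
    from fun_cong[OF has_derivative_constant_zero[OF this that(2)], of 1] show ?thesis by simp
  qed
  have "\<gamma> t $ 1 $ 2 = 0 \<and> \<gamma> t $ 1 $ 3 = 0 \<and> \<gamma> t $ 2 $ 3 = 0 \<and> \<gamma> t $ 2 $ 2 - \<gamma> t $ 3 $ 3 = 0" for t
    using \<gamma>[of t] by (simp add: RAut_eq lower_triangular_GL_def)
  then have "X$1$2 = 0" "X$1$3 = 0" "X$2$3 = 0" "X$2$2 - X$3$3 = 0"
    using vanish[OF bounded_linear_matrix_entry[of 1 2]] vanish[OF bounded_linear_matrix_entry[of 1 3]]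
      vanish[OF bounded_linear_matrix_entry[of 2 3]]
      vanish[OF bounded_linear_sub[OF bounded_linear_matrix_entry[of 2 2] bounded_linear_matrix_entry[of 3 3]]]
    by auto
  then have "X = X$2$1 *\<^sub>R matrix_unit 2 1 + X$3$1 *\<^sub>R matrix_unit 3 1 + X$3$2 *\<^sub>R matrix_unit 3 2
      + X$1$1 *\<^sub>R matrix_unit 1 1 + X$2$2 *\<^sub>R (matrix_unit 2 2 + matrix_unit 3 3)"
    by (simp add: vec_eq_iff forall_3)
  also have "\<dots> \<in> span RAut_lie_basis"
    by (intro span_add span_scale span_base) (auto simp: RAut_lie_basis_def)
  finally show ?thesis .
qed

lemma orbit_velocity:
  assumes inv: "\<And>t. invertible (\<gamma> t)" and \<gamma>0: "\<gamma> 0 = mat 1"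
    and D: "(\<gamma> has_derivative (\<lambda>s. s *\<^sub>R X)) (at 0)"
    and v: "((\<lambda>t. act (\<gamma> t) P) has_vector_derivative v) (at 0)"
  shows "v = orbit_differential P X"
proof -
  define F where "F t = act (\<gamma> t) P" for t
  have F: "(F has_derivative (\<lambda>s. s *\<^sub>R v)) (at 0)"
    using v unfolding F_def has_vector_derivative_def .
  have "transpose (\<gamma> t) ** F t ** \<gamma> t = P" for t
  proof -
    have "transpose (\<gamma> t) ** F t ** \<gamma> t
        = (transpose (\<gamma> t) ** transpose (matrix_inv (\<gamma> t))) ** P ** (matrix_inv (\<gamma> t) ** \<gamma> t)"
      by (simp add: F_def act_def matrix_mul_assoc)
    also have "\<dots> = P"
      by (simp add: matrix_inv_left inv flip: matrix_transpose_mul)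
    finally show ?thesis .
  qed
  moreover have "((\<lambda>t. transpose (\<gamma> t) ** F t ** \<gamma> t) has_derivative
      (\<lambda>s. (transpose (\<gamma> 0) ** F 0) ** (s *\<^sub>R X)
          + (transpose (\<gamma> 0) ** (s *\<^sub>R v) + transpose (s *\<^sub>R X) ** F 0) ** \<gamma> 0)) (at 0)"
    by (intro bounded_bilinear.FDERIV[OF bounded_bilinear_matrix_mult] D F
        bounded_linear.has_derivative[OF bounded_linear_transpose])
  ultimately have "(\<lambda>s. (transpose (\<gamma> 0) ** F 0) ** (s *\<^sub>R X)
          + (transpose (\<gamma> 0) ** (s *\<^sub>R v) + transpose (s *\<^sub>R X) ** F 0) ** \<gamma> 0) = (\<lambda>_. 0)"
    by (rule has_derivative_constant_zero[rotated])
  from fun_cong[OF this, of 1] have "P ** X + (v + transpose X ** P) = 0"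
    by (simp add: F_def \<gamma>0 act_mat1)
  then show ?thesis
    unfolding orbit_differential_def by (simp add: algebra_simps eq_neg_iff_add_eq_0)
qed

lemma orbit_tangent_subset_span: "orbit_tangent P \<subseteq> span (orbit_differential P ` RAut_lie_basis)"
proof
  fix v assume "v \<in> orbit_tangent P"
  then obtain \<gamma> where \<gamma>: "\<And>t. \<gamma> t \<in> RAut" "\<gamma> 0 = mat 1" "\<gamma> differentiable (at 0)"
      "((\<lambda>t. act (\<gamma> t) P) has_vector_derivative v) (at 0)"
    unfolding orbit_tangent_def by blast
  obtain D where D: "(\<gamma> has_derivative D) (at 0)" using \<gamma>(3) unfolding differentiable_def by blast
  define X where "X = D 1"
  have "D s = s *\<^sub>R X" for s
    using linear_scale[OF has_derivative_linear[OF D], of s 1] by (simp add: X_def)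
  then have "D = (\<lambda>s. s *\<^sub>R X)" by blast
  with D have D': "(\<gamma> has_derivative (\<lambda>s. s *\<^sub>R X)) (at 0)" by simp
  have inv: "invertible (\<gamma> t)" for t
    using \<gamma>(1)[of t] lower_triangular_GL_inverse(1) by (auto simp: RAut_eq)
  have "v = orbit_differential P X"
    by (rule orbit_velocity[OF inv \<gamma>(2) D' \<gamma>(4)])
  also have "\<dots> \<in> orbit_differential P ` span RAut_lie_basis"
    using RAut_derivative_in_span[OF \<gamma>(1) D'] by blast
  finally show "v \<in> span (orbit_differential P ` RAut_lie_basis)"
    by (simp add: linear_span_image[OF linear_orbit_differential])
qed

lemma orbit_dim_le: "orbit_dim P \<le> 5"
proof -
  have "orbit_dim P \<le> card (orbit_differential P ` RAut_lie_basis)"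
    unfolding orbit_dim_def
    by (rule dim_le_card[OF orbit_tangent_subset_span]) (simp add: RAut_lie_basis_def)
  also have "\<dots> \<le> card RAut_lie_basis"
    by (rule card_image_le) (simp add: RAut_lie_basis_def)
  also have "\<dots> \<le> 5"
    by (simp add: RAut_lie_basis_def card_insert_le_m1)
  finally show ?thesis .
qed

lemma orbit_differential_in_tangent:
  assumes R: "\<And>t. mat 1 + a t *\<^sub>R X \<in> RAut"
    and inverse: "\<And>t. (mat 1 + a t *\<^sub>R X) ** (mat 1 + b t *\<^sub>R X) = mat 1"
      "\<And>t. (mat 1 + b t *\<^sub>R X) ** (mat 1 + a t *\<^sub>R X) = mat 1"
    and a: "a 0 = 0" "(a has_real_derivative 1) (at 0)"
    and b: "b 0 = 0" "(b has_real_derivative -1) (at 0)"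
  shows "orbit_differential P X \<in> orbit_tangent P"
proof -
  define \<gamma> where "\<gamma> t = mat 1 + a t *\<^sub>R X" for t
  have act: "act (\<gamma> t) P
      = P + b t *\<^sub>R (transpose X ** P + P ** X) + (b t * b t) *\<^sub>R (transpose X ** P ** X)" for t
    using matrix_inv_unique[OF inverse[of t]]
    by (simp add: \<gamma>_def act_def transpose_add transpose_scalar matrix_add_ldistrib matrix_add_rdistrib
        matrix_scalar_ac scalar_matrix_assoc[symmetric] algebra_simps)
  have "(\<gamma> has_vector_derivative X) (at 0)"
    unfolding \<gamma>_def by (auto intro!: derivative_eq_intros a(2))
  moreover have "((\<lambda>t. act (\<gamma> t) P) has_vector_derivative orbit_differential P X) (at 0)"
    unfolding act by (auto intro!: derivative_eq_intros b(2) simp: b(1) orbit_differential_def)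
  moreover have "\<gamma> 0 = mat 1" "\<forall>t. \<gamma> t \<in> RAut" by (simp_all add: \<gamma>_def a(1) R)
  ultimately show ?thesis
    unfolding orbit_tangent_def using differentiableI_vector by blast
qed

lemma RAut_lie_basis_tangent: "orbit_differential P ` RAut_lie_basis \<subseteq> orbit_tangent P"
proof -
  have nilpotent: "orbit_differential P X \<in> orbit_tangent P"
    if "X \<in> {matrix_unit 2 1, matrix_unit 3 1, matrix_unit 3 2}" for X
    using that
    by (intro orbit_differential_in_tangent[where a = "\<lambda>t. t" and b = "\<lambda>t. - t"])
      (auto intro!: derivative_eq_intros simp: RAut_eq lower_triangular_GL_def mat_def mat3_eq_iff
        matrix_mult_entry_3)
  have idempotent: "orbit_differential P X \<in> orbit_tangent P"
    if "X \<in> {matrix_unit 1 1, matrix_unit 2 2 + matrix_unit 3 3}" for X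
  proof (rule orbit_differential_in_tangent[where a = "\<lambda>t. exp t - 1" and b = "\<lambda>t. exp (- t) - 1"])
    have e: "exp t * exp (- t) = 1" "exp (- t) * exp t = 1" for t :: real
      by (simp_all add: exp_minus_inverse mult.commute)
    show "mat 1 + (exp t - 1) *\<^sub>R X \<in> RAut" for t
      using that by (auto simp: RAut_eq lower_triangular_GL_def mat_def)
    show "(mat 1 + (exp t - 1) *\<^sub>R X) ** (mat 1 + (exp (- t) - 1) *\<^sub>R X) = mat 1"
      "(mat 1 + (exp (- t) - 1) *\<^sub>R X) ** (mat 1 + (exp t - 1) *\<^sub>R X) = mat 1" for t
      using that e by (auto simp: mat3_eq_iff matrix_mult_entry_3 mat_def algebra_simps)
  qed (auto intro!: derivative_eq_intros)
  show ?thesis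
    using nilpotent idempotent by (auto simp: RAut_lie_basis_def)
qed

lemma independent_orbit_differential_mat1:
  "independent (orbit_differential (mat 1) ` RAut_lie_basis)" (is "independent ?T")
proof (rule independent_matrices_by_entries)
  fix A assume "A \<in> ?T"
  then consider "A = orbit_differential (mat 1) (matrix_unit 2 1)"
    | "A = orbit_differential (mat 1) (matrix_unit 3 1)"
    | "A = orbit_differential (mat 1) (matrix_unit 3 2)"
    | "A = orbit_differential (mat 1) (matrix_unit 1 1)"
    | "A = orbit_differential (mat 1) (matrix_unit 2 2 + matrix_unit 3 3)"
    unfolding RAut_lie_basis_def by blast
  then show "\<exists>i j. A$i$j \<noteq> 0 \<and> (\<forall>B\<in>?T. B \<noteq> A \<longrightarrow> B$i$j = 0)"
  proof cases
    case 1 show ?thesis unfolding 1 by (intro exI[of _ 2] exI[of _ 1])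
        (simp add: RAut_lie_basis_def orbit_differential_def transpose_def)
  next
    case 2 show ?thesis unfolding 2 by (intro exI[of _ 3] exI[of _ 1])
        (simp add: RAut_lie_basis_def orbit_differential_def transpose_def)
  next
    case 3 show ?thesis unfolding 3 by (intro exI[of _ 3] exI[of _ 2])
        (simp add: RAut_lie_basis_def orbit_differential_def transpose_def)
  next
    case 4 show ?thesis unfolding 4 by (intro exI[of _ 1] exI[of _ 1])
        (simp add: RAut_lie_basis_def orbit_differential_def transpose_def)
  next
    case 5 show ?thesis unfolding 5 by (intro exI[of _ 2] exI[of _ 2])
        (simp add: RAut_lie_basis_def orbit_differential_def transpose_def)
  qed
qed (simp add: RAut_lie_basis_def)

lemma orbit_dim_mat1: "orbit_dim (mat 1) = 5"
proof -
  have "card (orbit_differential (mat 1) ` RAut_lie_basis) = 5"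
    by (simp add: RAut_lie_basis_def orbit_differential_def vec_eq_iff forall_3 transpose_def)
  then have "5 \<le> orbit_dim (mat 1)"
    unfolding orbit_dim_def
    using independent_card_le_dim[OF RAut_lie_basis_tangent independent_orbit_differential_mat1] by simp
  with orbit_dim_le show ?thesis by (simp add: le_antisym)
qed

theorem lemma5p1:
  shows "cohomogeneity_one \<and>
         (\<forall>P\<in>Mg. \<forall>Q\<in>Mg. \<exists>f. isometry_Mg f \<and> f ` orbit P = orbit Q)"
proof
  have "mat 1 \<in> Mg" by (simp add: Mg_def)
  moreover have "finite (orbit_dim ` Mg)"
    by (rule finite_subset[of _ "{..5}"]) (auto simp: orbit_dim_le)
  ultimately have "Max (orbit_dim ` Mg) = 5"
    using orbit_dim_le orbit_dim_mat1 by (intro Max_eqI) (auto intro: rev_image_eqI)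
  then show "cohomogeneity_one"
    unfolding cohomogeneity_one_def by (simp add: dim_Mg_eq)
  show "\<forall>P\<in>Mg. \<forall>Q\<in>Mg. \<exists>f. isometry_Mg f \<and> f ` orbit P = orbit Q"
    using orbits_congruent by blast
qed

end
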